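(* Let $\kappa$ be a regular cardinal and $M=\langle W,S\rangle$ a $\kappa$-downward directed multi-relational Kripke frame. Then $\theta_M:W\to\mathrm{At}(G(M))$, $\theta_M(w)=\{w\}$, is an isomorphism of multi-relational Kripke frames from $M$ to $F(G(M))$.
   Context: A multi-relational Kripke frame is a pair $\langle W,S\rangle$ with $W$ non-empty and $S$ a non-empty set of binary relations on $W$; it is $\kappa$-downward directed if for every $S'\subseteq S$ with $|S'|<\kappa$ there is $R\in S$ with $R\subseteq\bigcap S'$ (with $\bigcap\emptyset=W\times W$). A homomorphism $g:\langle W_1,S_1\rangle\to\langle W_2,S_2\rangle$ is a map $g:W_1\to W_2$ such that: (i) for every $x\in W_1$ and $R_2\in S_2$ there is $R_1\in S_1$ such that for all $y\in W_1$, $xR_1y$ implies $g(x)R_2g(y)$; (ii) for every $x\in W_1$ and $R_1\in S_1$ there is $R_2\in S_2$ such that for all $u\in W_2$, if $g(x)R_2u$ then there exists $y\in W_1$ with $xR_1y$ and $g(y)=u$. An isomorphism is a bijective homomorphism. $G(M)$ is the powerset Boolean algebra $\mathcal P(W)$ with $\Diamond_MX=\{w\mid\forall R\in S\ \exists x\in X\ (wRx)\}$; its atoms are the singletons. For a complete atomic modal algebra $A$, $F(A)=\langle\mathrm{At}(A),\{R(X)\mid X\subseteq A,|X|<\kappa\}\rangle$ with $a\,R(X)\,c\iff a\leq\bigwedge\{\Diamond x\mid x\in X,\ c\leq x\}$ (empty meet $=1$). *)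

theory Defs
  imports Main
begin

unbundle cardinal_syntax

definition kripke_frame :: "'a set \<Rightarrow> 'a rel set \<Rightarrow> bool" where
  "kripke_frame W S \<longleftrightarrow> W \<noteq> {} \<and> S \<noteq> {} \<and> (\<forall>R\<in>S. R \<subseteq> W \<times> W)"

text \<open>kappa-downward directedness; the cardinal kappa is a cardinal order k,
  and |S'| < kappa is ordLess of card_of; the empty intersection is W x W.\<close>
definition downward_directed :: "'k rel \<Rightarrow> 'a set \<Rightarrow> 'a rel set \<Rightarrow> bool" where
  "downward_directed k W S \<longleftrightarrow>
     (\<forall>S'. S' \<subseteq> S \<and> |S'| <o k \<longrightarrow> (\<exists>R\<in>S. R \<subseteq> (W \<times> W) \<inter> \<Inter>S'))"

definition frame_hom :: "'a set \<Rightarrow> 'a rel set \<Rightarrow> 'b set \<Rightarrow> 'b rel set \<Rightarrow> ('a \<Rightarrow> 'b) \<Rightarrow> bool" where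
  "frame_hom W1 S1 W2 S2 g \<longleftrightarrow>
     (\<forall>x\<in>W1. g x \<in> W2) \<and>
     (\<forall>x\<in>W1. \<forall>R2\<in>S2. \<exists>R1\<in>S1. \<forall>y\<in>W1. (x, y) \<in> R1 \<longrightarrow> (g x, g y) \<in> R2) \<and>
     (\<forall>x\<in>W1. \<forall>R1\<in>S1. \<exists>R2\<in>S2. \<forall>u\<in>W2. (g x, u) \<in> R2 \<longrightarrow> (\<exists>y\<in>W1. (x, y) \<in> R1 \<and> g y = u))"

definition frame_iso :: "'a set \<Rightarrow> 'a rel set \<Rightarrow> 'b set \<Rightarrow> 'b rel set \<Rightarrow> ('a \<Rightarrow> 'b) \<Rightarrow> bool" where
  "frame_iso W1 S1 W2 S2 g \<longleftrightarrow> frame_hom W1 S1 W2 S2 g \<and> bij_betw g W1 W2"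

text \<open>The complex algebra G(M): powerset algebra of W (order = inclusion, top = W)
  with the diamond operator below.\<close>
definition G_diamond :: "'a set \<Rightarrow> 'a rel set \<Rightarrow> 'a set \<Rightarrow> 'a set" where
  "G_diamond W S X = {w \<in> W. \<forall>R\<in>S. \<exists>x\<in>X. (w, x) \<in> R}"

definition G_atoms :: "'a set \<Rightarrow> 'a set set" where
  "G_atoms W = {a. a \<subseteq> W \<and> a \<noteq> {} \<and> (\<forall>b. b \<subseteq> a \<longrightarrow> b = {} \<or> b = a)}"

definition F_rel :: "'a set \<Rightarrow> 'a rel set \<Rightarrow> 'a set set \<Rightarrow> 'a set rel" where
  "F_rel W S X = {(a, c). a \<in> G_atoms W \<and> c \<in> G_atoms W \<and>
      a \<subseteq> W \<inter> \<Inter>{G_diamond W S x | x. x \<in> X \<and> c \<subseteq> x}}"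

definition F_rels :: "'k rel \<Rightarrow> 'a set \<Rightarrow> 'a rel set \<Rightarrow> 'a set rel set" where
  "F_rels k W S = {F_rel W S X | X. X \<subseteq> Pow W \<and> |X| <o k}"

end

theory Submission
  imports Defs
begin

text \<open>The atoms of the powerset algebra are the singletons, so \<open>w \<mapsto> {w}\<close> is a bijection onto them.
  Forth: if \<open>({x},{y})\<close> is to lie in \<open>R(X)\<close>, every \<open>x' \<in> X\<close> at which \<open>x\<close> fails \<open>\<Diamond>x'\<close> is witnessed
  by some \<open>R \<in> S\<close> avoiding \<open>x'\<close> from \<open>x\<close>; fewer than \<open>\<kappa>\<close> such witnesses exist, and downward
  directedness gives one relation below all of them. Back: for \<open>R \<in> S\<close> the single set
  \<open>W - R``{x}\<close> yields \<open>R(X)\<close> whose successors of \<open>{x}\<close> are all \<open>R\<close>-successors, since \<open>x\<close> never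
  satisfies \<open>\<Diamond>(W - R``{x})\<close>.\<close>

lemma finite_card_of_ordLess_Cinfinite:
  assumes "Cinfinite k" "finite A"
  shows "|A| <o k"
proof (rule Cfinite_ordLess_Cinfinite[OF _ assms(1)])
  show "Cfinite |A|" using assms(2) by (simp add: cfinite_def card_of_card_order_on Field_card_of)
qed

lemma G_atoms_eq_singletons: "G_atoms W = (\<lambda>w. {w}) ` W"
proof
  show "G_atoms W \<subseteq> (\<lambda>w. {w}) ` W"
  proof
    fix a assume a: "a \<in> G_atoms W"
    then obtain w where w: "w \<in> a" unfolding G_atoms_def by auto
    with a have "a = {w}" unfolding G_atoms_def by blast
    with a w show "a \<in> (\<lambda>w. {w}) ` W" unfolding G_atoms_def by auto
  qed
next
  show "(\<lambda>w. {w}) ` W \<subseteq> G_atoms W"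
    unfolding G_atoms_def by (auto simp: subset_singleton_iff)
qed

lemma bij_betw_singleton_G_atoms: "bij_betw (\<lambda>w. {w}) W (G_atoms W)"
  unfolding G_atoms_eq_singletons by (auto simp: bij_betw_def inj_on_def)

lemma singleton_in_F_rel_iff:
  assumes "x \<in> W" "y \<in> W"
  shows "({x}, {y}) \<in> F_rel W S X \<longleftrightarrow> (\<forall>x'\<in>X. y \<in> x' \<longrightarrow> x \<in> G_diamond W S x')"
  using assms unfolding F_rel_def G_atoms_eq_singletons by auto

lemma F_rel_forth:
  assumes directed: "downward_directed k W S"
    and X: "|X| <o k" and x: "x \<in> W"
  shows "\<exists>R\<in>S. \<forall>y\<in>W. (x, y) \<in> R \<longrightarrow> ({x}, {y}) \<in> F_rel W S X"
proof -
  define B where "B = {x' \<in> X. x \<notin> G_diamond W S x'}"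
  have "\<forall>x'\<in>B. \<exists>R\<in>S. \<forall>z\<in>x'. (x, z) \<notin> R"
    using x unfolding B_def G_diamond_def by auto
  then obtain avoid where avoid: "\<And>x'. x' \<in> B \<Longrightarrow> avoid x' \<in> S \<and> (\<forall>z\<in>x'. (x, z) \<notin> avoid x')"
    by metis
  have "|avoid ` B| <o k"
  proof -
    have "|avoid ` B| \<le>o |B|" by (rule card_of_image)
    also have "|B| \<le>o |X|" unfolding B_def by (rule card_of_mono1) blast
    finally show ?thesis using X by (rule ordLeq_ordLess_trans)
  qed
  moreover have "avoid ` B \<subseteq> S" using avoid by auto
  ultimately obtain R where R: "R \<in> S" "R \<subseteq> \<Inter>(avoid ` B)"
    using directed unfolding downward_directed_def by (meson le_infE)
  show ?thesis
  proof (intro bexI[OF _ R(1)] ballI impI)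
    fix y assume y: "y \<in> W" and xy: "(x, y) \<in> R"
    have "x \<in> G_diamond W S x'" if "x' \<in> X" "y \<in> x'" for x'
    proof (rule ccontr)
      assume "x \<notin> G_diamond W S x'"
      with that have "x' \<in> B" unfolding B_def by auto
      with R(2) xy avoid that show False by blast
    qed
    then show "({x}, {y}) \<in> F_rel W S X" using singleton_in_F_rel_iff[OF x y] by blast
  qed
qed

lemma F_rel_back:
  assumes "R \<in> S" "x \<in> W" "y \<in> W" "({x}, {y}) \<in> F_rel W S {W - R `` {x}}"
  shows "(x, y) \<in> R"
proof (rule ccontr)
  assume "(x, y) \<notin> R"
  with assms(2-4) have "x \<in> G_diamond W S (W - R `` {x})"
    using singleton_in_F_rel_iff by fastforce
  with assms(1) show False unfolding G_diamond_def by auto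
qed

theorem theorem9p4:
  fixes W :: "'a set" and S :: "'a rel set" and k :: "'k rel"
  assumes "Card_order k" and "Cinfinite k" and "regularCard k"
    and "kripke_frame W S"
    and "downward_directed k W S"
  shows "frame_iso W S (G_atoms W) (F_rels k W S) (\<lambda>w. {w})"
proof -
  have forward: "\<exists>R\<in>S. \<forall>y\<in>W. (x, y) \<in> R \<longrightarrow> ({x}, {y}) \<in> Q"
    if x: "x \<in> W" and Q: "Q \<in> F_rels k W S" for x Q
  proof -
    from Q obtain X where X: "|X| <o k" and Q_eq: "Q = F_rel W S X"
      unfolding F_rels_def by blast
    show ?thesis unfolding Q_eq by (rule F_rel_forth[OF assms(5) X x])
  qed
  have backward: "\<exists>Q\<in>F_rels k W S. \<forall>u\<in>G_atoms W. ({x}, u) \<in> Q \<longrightarrow> (\<exists>y\<in>W. (x, y) \<in> R \<and> {y} = u)"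
    if "x \<in> W" "R \<in> S" for x R
  proof
    have "|{W - R `` {x}}| <o k"
      using assms(2) by (rule finite_card_of_ordLess_Cinfinite) simp
    then show "F_rel W S {W - R `` {x}} \<in> F_rels k W S" unfolding F_rels_def by blast
    show "\<forall>u\<in>G_atoms W. ({x}, u) \<in> F_rel W S {W - R `` {x}} \<longrightarrow> (\<exists>y\<in>W. (x, y) \<in> R \<and> {y} = u)"
      using F_rel_back[OF that(2,1)] unfolding G_atoms_eq_singletons by blast
  qed
  have "\<forall>x\<in>W. {x} \<in> G_atoms W" unfolding G_atoms_eq_singletons by auto
  with forward backward have "frame_hom W S (G_atoms W) (F_rels k W S) (\<lambda>w. {w})"
    unfolding frame_hom_def by (intro conjI ballI) auto
  with bij_betw_singleton_G_atoms show ?thesis unfolding frame_iso_def by blast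
qed

end
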